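(* If a spectrahedral cone $K\subseteq\mathbb{R}^n$ contains the positive orthant $\mathbb{R}_+^n$, then $K$ admits a normalized spectrahedral representation.
   Context: For real symmetric $k\times k$ matrices $C=\{C_i\}_{i\in[n]}$, $K_C=\{x\in\mathbb{R}^n:\sum_iC_ix_i\succeq0\}$; $C$ is a spectrahedral representation of $K_C$, and a cone of this form is spectrahedral. A representation $K=\{x:\sum_iC_ix_i\succeq0\}$ is normalized if $\sum_{i=1}^nC_i=\mathrm{Id}_k$ and $C_i\succeq0$ for all $i$ (the matrix size $k$ may differ from that of the original representation). *)

theory Defs
  imports "HOL-Analysis.Analysis"
begin

text \<open>A k x k real matrix is represented as a function nat => nat => real;
  only the entries with indices below k are relevant.\<close>

definition sym_mat :: "nat \<Rightarrow> (nat \<Rightarrow> nat \<Rightarrow> real) \<Rightarrow> bool" where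
  "sym_mat k A \<longleftrightarrow> (\<forall>i<k. \<forall>j<k. A i j = A j i)"

definition psd :: "nat \<Rightarrow> (nat \<Rightarrow> nat \<Rightarrow> real) \<Rightarrow> bool" where
  "psd k A \<longleftrightarrow> sym_mat k A \<and>
     (\<forall>v :: nat \<Rightarrow> real. 0 \<le> (\<Sum>i<k. \<Sum>j<k. v i * A i j * v j))"

definition pencil :: "('n::finite \<Rightarrow> nat \<Rightarrow> nat \<Rightarrow> real) \<Rightarrow> real^'n \<Rightarrow> nat \<Rightarrow> nat \<Rightarrow> real" where
  "pencil C x = (\<lambda>i j. \<Sum>l\<in>UNIV. x $ l * C l i j)"

definition spec_cone :: "nat \<Rightarrow> ('n::finite \<Rightarrow> nat \<Rightarrow> nat \<Rightarrow> real) \<Rightarrow> (real^'n) set" where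
  "spec_cone k C = {x. psd k (pencil C x)}"

definition spectrahedral_rep :: "(real^'n::finite) set \<Rightarrow> nat \<Rightarrow> ('n \<Rightarrow> nat \<Rightarrow> nat \<Rightarrow> real) \<Rightarrow> bool" where
  "spectrahedral_rep K k C \<longleftrightarrow> (\<forall>l. sym_mat k (C l)) \<and> K = spec_cone k C"

definition spectrahedral :: "(real^'n::finite) set \<Rightarrow> bool" where
  "spectrahedral K \<longleftrightarrow> (\<exists>k C. spectrahedral_rep K k C)"

definition normalized_rep :: "(real^'n::finite) set \<Rightarrow> nat \<Rightarrow> ('n \<Rightarrow> nat \<Rightarrow> nat \<Rightarrow> real) \<Rightarrow> bool" where
  "normalized_rep K k C \<longleftrightarrow> spectrahedral_rep K k C \<and>
     (\<forall>i<k. \<forall>j<k. (\<Sum>l\<in>UNIV. C l i j) = (if i = j then 1 else 0)) \<and>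
     (\<forall>l. psd k (C l))"

definition positive_orthant :: "(real^'n::finite) set" where
  "positive_orthant = {x. \<forall>l. 0 \<le> x $ l}"

end

theory Submission
  imports Defs
begin

text \<open>Every coordinate vector lies in the positive orthant, so every \<open>C\<^sub>l\<close> is PSD, hence
  so is \<open>S = \<Sum>\<^sub>l C\<^sub>l\<close>. Gram--Schmidt with respect to the semi-inner product \<open>S\<close> yields
  vectors \<open>p\<^sub>1, \<dots>, p\<^sub>r\<close> with \<open>p\<^sub>a\<^sup>T S p\<^sub>b = \<delta>\<^sub>a\<^sub>b\<close> spanning \<open>\<real>\<^sup>k\<close> modulo the radical of
  \<open>S\<close>. As the \<open>C\<^sub>l\<close> are PSD, that radical lies in the radical of every \<open>C\<^sub>l\<close>, hence of every
  pencil \<open>\<Sum>\<^sub>l x\<^sub>l C\<^sub>l\<close>; so compressing to \<open>D\<^sub>l = P\<^sup>T C\<^sub>l P\<close> with \<open>P = (p\<^sub>1 \<dots> p\<^sub>r)\<close> does not change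
  which pencils are PSD, while \<open>\<Sum>\<^sub>l D\<^sub>l = P\<^sup>T S P = Id\<^sub>r\<close>.\<close>

definition bilin :: "nat \<Rightarrow> (nat \<Rightarrow> nat \<Rightarrow> real) \<Rightarrow> (nat \<Rightarrow> real) \<Rightarrow> (nat \<Rightarrow> real) \<Rightarrow> real" where
  "bilin k A u v = (\<Sum>i<k. \<Sum>j<k. u i * A i j * v j)"

lemma bilin_add_left: "bilin k A (\<lambda>i. u i + w i) v = bilin k A u v + bilin k A w v"
  by (simp add: bilin_def distrib_right sum.distrib)

lemma bilin_add_right: "bilin k A v (\<lambda>i. u i + w i) = bilin k A v u + bilin k A v w"
  by (simp add: bilin_def distrib_left sum.distrib)

lemma bilin_diff_right: "bilin k A v (\<lambda>i. u i - w i) = bilin k A v u - bilin k A v w"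
  by (simp add: bilin_def right_diff_distrib sum_subtractf)

lemma bilin_scale_left: "bilin k A (\<lambda>i. t * u i) v = t * bilin k A u v"
  by (simp add: bilin_def sum_distrib_left mult.assoc)

lemma bilin_scale_right: "bilin k A v (\<lambda>i. t * u i) = t * bilin k A v u"
  by (simp add: bilin_def sum_distrib_left mult.assoc mult.left_commute)

lemma bilin_divide_left: "bilin k A (\<lambda>i. u i / t) v = bilin k A u v / t"
  by (simp add: bilin_def sum_divide_distrib)

lemma bilin_divide_right: "bilin k A v (\<lambda>i. u i / t) = bilin k A v u / t"
  by (simp add: bilin_def sum_divide_distrib)

lemma bilin_lincomb_left:
  "bilin k A (\<lambda>i. \<Sum>a\<in>F. c a * p a i) v = (\<Sum>a\<in>F. c a * bilin k A (p a) v)"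
  unfolding bilin_def
  by (simp add: sum_distrib_left sum_distrib_right mult.assoc; subst sum.swap; simp add: sum.swap[of _ F])

lemma bilin_lincomb_right:
  "bilin k A v (\<lambda>i. \<Sum>a\<in>F. c a * p a i) = (\<Sum>a\<in>F. c a * bilin k A v (p a))"
  unfolding bilin_def
  by (simp add: sum_distrib_left sum_distrib_right mult.assoc mult.left_commute;
      subst sum.swap; simp add: sum.swap[of _ F])

lemma bilin_sum_matrix: "bilin k (\<lambda>i j. \<Sum>l\<in>L. A l i j) u v = (\<Sum>l\<in>L. bilin k (A l) u v)"
  unfolding bilin_def
  by (simp add: sum_distrib_left sum_distrib_right mult.assoc mult.left_commute;
      subst sum.swap; simp add: sum.swap[of _ L])

lemma bilin_pencil: "bilin k (pencil C x) u v = (\<Sum>l\<in>UNIV. x $ l * bilin k (C l) u v)"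
  unfolding bilin_def pencil_def
  by (simp add: sum_distrib_left sum_distrib_right mult.assoc mult.left_commute;
      subst sum.swap; simp add: sum.swap[of _ UNIV])

lemma bilin_commute: "sym_mat k A \<Longrightarrow> bilin k A u v = bilin k A v u"
  unfolding bilin_def sym_mat_def
  by (subst sum.swap) (auto intro!: sum.cong simp: mult.commute mult.left_commute)

lemma bilin_cong_right: "(\<And>j. j < k \<Longrightarrow> u j = w j) \<Longrightarrow> bilin k A v u = bilin k A v w"
  unfolding bilin_def by simp

lemma psd_iff_bilin: "psd k A \<longleftrightarrow> sym_mat k A \<and> (\<forall>v. 0 \<le> bilin k A v v)"
  by (simp add: psd_def bilin_def)

lemma sym_mat_pencil: "(\<And>l. sym_mat k (C l)) \<Longrightarrow> sym_mat k (pencil C x)"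
  by (simp add: sym_mat_def pencil_def)

definition in_radical :: "nat \<Rightarrow> (nat \<Rightarrow> nat \<Rightarrow> real) \<Rightarrow> (nat \<Rightarrow> real) \<Rightarrow> bool" where
  "in_radical k A u \<longleftrightarrow> (\<forall>y. bilin k A y u = 0)"

lemma in_radical_if_psd_isotropic:
  assumes "psd k A" and "bilin k A u u = 0"
  shows "in_radical k A u"
  unfolding in_radical_def
proof
  fix y
  have sym: "sym_mat k A" and nonneg: "\<And>v. 0 \<le> bilin k A v v"
    using assms(1) by (auto simp: psd_iff_bilin)
  define b where "b = bilin k A y u"
  define q where "q = bilin k A y y"
  have "q \<ge> 0" using nonneg q_def by simp
  have expand: "bilin k A (\<lambda>i. u i + t * y i) (\<lambda>i. u i + t * y i) = 2 * t * b + t\<^sup>2 * q" for t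
    using bilin_commute[OF sym, of u y] assms(2)
    by (simp add: bilin_add_left bilin_add_right bilin_scale_left bilin_scale_right
        b_def q_def power2_eq_square algebra_simps)
  \<comment> \<open>Nonnegativity of the form at \<open>u + t y\<close> with this \<open>t\<close> forces \<open>b\<^sup>2 (q + 2) \<le> 0\<close>.\<close>
  define t where "t = - b / (q + 1)"
  have "t * (q + 1) = - b" using \<open>q \<ge> 0\<close> by (simp add: t_def)
  have "0 \<le> (q + 1)\<^sup>2 * (2 * t * b + t\<^sup>2 * q)"
    using nonneg expand by (metis zero_le_power2 mult_nonneg_nonneg)
  also have "\<dots> = b\<^sup>2 * (- q - 2)" using \<open>t * (q + 1) = - b\<close> by algebra
  finally have "b\<^sup>2 \<le> 0" using \<open>q \<ge> 0\<close> by (smt (verit) mult_pos_neg zero_le_power2)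
  thus "bilin k A y u = 0" unfolding b_def by simp
qed

lemma in_radical_of_sum_psd:
  assumes "finite L" and "\<And>l. l \<in> L \<Longrightarrow> psd k (A l)"
    and "in_radical k (\<lambda>i j. \<Sum>l\<in>L. A l i j) u" and "l \<in> L"
  shows "in_radical k (A l) u"
proof -
  have "(\<Sum>l\<in>L. bilin k (A l) u u) = 0"
    using assms(3) by (simp add: in_radical_def bilin_sum_matrix)
  hence "bilin k (A l) u u = 0"
    using assms by (subst (asm) sum_nonneg_eq_0_iff) (auto simp: psd_iff_bilin)
  thus ?thesis using in_radical_if_psd_isotropic assms(2,4) by blast
qed

lemma in_radical_pencil: "(\<And>l. in_radical k (C l) u) \<Longrightarrow> in_radical k (pencil C x) u"
  by (simp add: in_radical_def bilin_pencil)

definition orthonormal :: "nat \<Rightarrow> (nat \<Rightarrow> nat \<Rightarrow> real) \<Rightarrow> nat \<Rightarrow> (nat \<Rightarrow> nat \<Rightarrow> real) \<Rightarrow> bool" where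
  "orthonormal k S r p \<longleftrightarrow> (\<forall>a<r. \<forall>b<r. bilin k S (p a) (p b) = (if a = b then 1 else 0))"

definition in_span_mod_radical ::
    "nat \<Rightarrow> (nat \<Rightarrow> nat \<Rightarrow> real) \<Rightarrow> nat \<Rightarrow> (nat \<Rightarrow> nat \<Rightarrow> real) \<Rightarrow> (nat \<Rightarrow> real) \<Rightarrow> bool" where
  "in_span_mod_radical k S r p v \<longleftrightarrow> (\<exists>c. in_radical k S (\<lambda>j. v j - (\<Sum>a<r. c a * p a j)))"

lemma in_span_mod_radical_mono:
  assumes "in_span_mod_radical k S r p v" and "r \<le> r'" and "\<And>a. a < r \<Longrightarrow> p' a = p a"
  shows "in_span_mod_radical k S r' p' v"
proof -
  obtain c where c: "in_radical k S (\<lambda>j. v j - (\<Sum>a<r. c a * p a j))"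
    using assms(1) by (auto simp: in_span_mod_radical_def)
  define c' where "c' a = (if a < r then c a else 0)" for a
  have "(\<Sum>a<r'. c' a * p' a j) = (\<Sum>a<r. c a * p a j)" for j
    using assms(2,3) by (intro sum.mono_neutral_cong_right) (auto simp: c'_def)
  thus ?thesis using c unfolding in_span_mod_radical_def by (intro exI[of _ c']) simp
qed

lemma in_span_mod_radical_lincomb:
  assumes "finite I" and "\<And>i. i \<in> I \<Longrightarrow> in_span_mod_radical k S r p (u i)"
  shows "in_span_mod_radical k S r p (\<lambda>j. \<Sum>i\<in>I. t i * u i j)"
proof -
  obtain c where c: "\<And>i. i \<in> I \<Longrightarrow> in_radical k S (\<lambda>j. u i j - (\<Sum>a<r. c i a * p a j))"
    using assms(2) unfolding in_span_mod_radical_def by metis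
  define c' where "c' a = (\<Sum>i\<in>I. t i * c i a)" for a
  have "(\<lambda>j. (\<Sum>i\<in>I. t i * u i j) - (\<Sum>a<r. c' a * p a j))
      = (\<lambda>j. \<Sum>i\<in>I. t i * (u i j - (\<Sum>a<r. c i a * p a j)))"
    unfolding c'_def
    by (simp add: right_diff_distrib sum_subtractf sum_distrib_left sum_distrib_right
        mult.assoc sum.swap[of _ I])
  hence "in_radical k S (\<lambda>j. (\<Sum>i\<in>I. t i * u i j) - (\<Sum>a<r. c' a * p a j))"
    using c by (simp add: in_radical_def bilin_lincomb_right)
  thus ?thesis unfolding in_span_mod_radical_def by blast
qed

lemma in_span_mod_radical_cong:
  "(\<And>j. j < k \<Longrightarrow> v j = w j) \<Longrightarrow> in_span_mod_radical k S r p v = in_span_mod_radical k S r p w"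
proof -
  assume "\<And>j. j < k \<Longrightarrow> v j = w j"
  hence "bilin k S y (\<lambda>j. v j - (\<Sum>a<r. c a * p a j)) = bilin k S y (\<lambda>j. w j - (\<Sum>a<r. c a * p a j))"
    for y c by (intro bilin_cong_right) simp
  thus ?thesis by (simp add: in_span_mod_radical_def in_radical_def)
qed

lemma gram_schmidt_step:
  assumes "psd k S" and "orthonormal k S r p"
  obtains r' p' where "orthonormal k S r' p'" "r \<le> r'" "\<And>a. a < r \<Longrightarrow> p' a = p a"
    "in_span_mod_radical k S r' p' u"
proof -
  have sym: "sym_mat k S" and nonneg: "\<And>v. 0 \<le> bilin k S v v"
    using assms(1) by (auto simp: psd_iff_bilin)
  define d where "d a = bilin k S (p a) u" for a
  define w where "w = (\<lambda>j. u j - (\<Sum>a<r. d a * p a j))"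
  have w_orth: "bilin k S (p b) w = 0" "bilin k S w (p b) = 0" if "b < r" for b
  proof -
    have "(\<Sum>a<r. d a * bilin k S (p b) (p a)) = (\<Sum>a<r. if a = b then d a else 0)"
      using assms(2) that by (intro sum.cong) (auto simp: orthonormal_def)
    thus "bilin k S (p b) w = 0"
      using that by (simp add: w_def bilin_diff_right bilin_lincomb_right d_def)
    thus "bilin k S w (p b) = 0" by (simp add: bilin_commute[OF sym])
  qed
  define q where "q = bilin k S w w"
  show ?thesis
  proof (cases "q = 0")
    case True
    hence "in_radical k S (\<lambda>j. u j - (\<Sum>a<r. d a * p a j))"
      using in_radical_if_psd_isotropic[OF assms(1)] by (simp add: q_def w_def)
    thus ?thesis using assms(2) that[of r p] by (auto simp: in_span_mod_radical_def)
  next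
    case False
    hence "q > 0" using nonneg[of w] q_def by simp
    define p' where "p' = p(r := (\<lambda>j. w j / sqrt q))"
    have "orthonormal k S (Suc r) p'"
      using assms(2) \<open>q > 0\<close> w_orth
      by (auto simp: orthonormal_def p'_def less_Suc_eq bilin_divide_left bilin_divide_right
          q_def[symmetric])
    moreover have "in_span_mod_radical k S (Suc r) p' u"
    proof -
      have "u j - (\<Sum>a<Suc r. (d(r := sqrt q)) a * p' a j) = 0" for j
        using \<open>q > 0\<close> by (simp add: p'_def w_def)
      thus ?thesis unfolding in_span_mod_radical_def in_radical_def
        by (intro exI[of _ "d(r := sqrt q)"]) (simp add: bilin_def)
    qed
    ultimately show ?thesis using that[of "Suc r" p'] by (simp add: p'_def)
  qed
qed

lemma gram_schmidt_family:
  fixes u :: "nat \<Rightarrow> nat \<Rightarrow> real" and m :: nat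
  assumes "psd k S"
  shows "\<exists>r p. orthonormal k S r p \<and> (\<forall>i<m. in_span_mod_radical k S r p (u i))"
proof (induction m)
  case 0
  show ?case by (intro exI[of _ 0]) (simp add: orthonormal_def)
next
  case (Suc m)
  then obtain r p where orth: "orthonormal k S r p"
    and span: "\<forall>i<m. in_span_mod_radical k S r p (u i)"
    by blast
  obtain r' p' where orth': "orthonormal k S r' p'" and "r \<le> r'" and "\<And>a. a < r \<Longrightarrow> p' a = p a"
    and span_new: "in_span_mod_radical k S r' p' (u m)"
    using gram_schmidt_step[OF assms orth, where u = "u m"] by blast
  have "in_span_mod_radical k S r' p' (u i)" if "i < Suc m" for i
  proof (cases "i = m")
    case False
    with that span have "in_span_mod_radical k S r p (u i)" by simp
    then show ?thesis by (rule in_span_mod_radical_mono) fact+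
  qed (use span_new in simp)
  with orth' show ?case by blast
qed

theorem gram_schmidt:
  assumes "psd k S"
  obtains r p where "orthonormal k S r p" and "\<And>v. in_span_mod_radical k S r p v"
proof -
  obtain r p where orth: "orthonormal k S r p"
    and units: "\<forall>i<k. in_span_mod_radical k S r p (\<lambda>j. if j = i then 1 else 0)"
    using gram_schmidt_family[OF assms, where u = "\<lambda>i j. if j = i then 1 else 0" and m = k] by blast
  have "in_span_mod_radical k S r p v" for v
  proof -
    have "v j = (\<Sum>i<k. v i * (if j = i then 1 else 0))" if "j < k" for j
    proof -
      have "(\<Sum>i<k. v i * (if j = i then 1 else 0)) = (\<Sum>i<k. if i = j then v i else 0)"
        by (intro sum.cong) auto
      with that show ?thesis by simp
    qed
    moreover have "in_span_mod_radical k S r p (\<lambda>j. \<Sum>i<k. v i * (if j = i then 1 else 0))"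
      using units by (intro in_span_mod_radical_lincomb) simp_all
    ultimately show ?thesis by (simp add: in_span_mod_radical_cong[of k v])
  qed
  with orth that show ?thesis by blast
qed

definition compress :: "nat \<Rightarrow> (nat \<Rightarrow> nat \<Rightarrow> real) \<Rightarrow> (nat \<Rightarrow> nat \<Rightarrow> real) \<Rightarrow> nat \<Rightarrow> nat \<Rightarrow> real" where
  "compress k M p = (\<lambda>a b. bilin k M (p a) (p b))"

lemma bilin_compress:
  "bilin r (compress k M p) c d = bilin k M (\<lambda>j. \<Sum>a<r. c a * p a j) (\<lambda>j. \<Sum>a<r. d a * p a j)"
proof -
  have "bilin k M (\<lambda>j. \<Sum>a<r. c a * p a j) (\<lambda>j. \<Sum>a<r. d a * p a j)
      = (\<Sum>a<r. c a * (\<Sum>b<r. d b * bilin k M (p a) (p b)))"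
    by (simp add: bilin_lincomb_left bilin_lincomb_right)
  thus ?thesis by (simp add: bilin_def compress_def sum_distrib_left mult_ac)
qed

lemma sym_mat_compress: "sym_mat k M \<Longrightarrow> sym_mat r (compress k M p)"
  by (simp add: sym_mat_def compress_def bilin_commute)

lemma psd_compress: "psd k M \<Longrightarrow> psd r (compress k M p)"
  by (simp add: psd_iff_bilin sym_mat_compress bilin_compress)

lemma psd_compress_iff:
  assumes sym: "sym_mat k M" and span: "\<And>v. in_span_mod_radical k M r p v"
  shows "psd r (compress k M p) \<longleftrightarrow> psd k M"
proof
  assume psd: "psd r (compress k M p)"
  have "0 \<le> bilin k M v v" for v
  proof -
    obtain c where "in_radical k M (\<lambda>j. v j - (\<Sum>a<r. c a * p a j))"
      using span by (auto simp: in_span_mod_radical_def)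
    moreover define Pc where "Pc j = (\<Sum>a<r. c a * p a j)" for j
    moreover define u where "u j = v j - Pc j" for j
    ultimately have rad: "in_radical k M u" by (simp add: u_def[abs_def] Pc_def[abs_def])
    have v_split: "v = (\<lambda>j. Pc j + u j)" by (simp add: u_def)
    have "bilin k M v v = bilin k M Pc Pc"
      using rad bilin_commute[OF sym, of u Pc] unfolding v_split
      by (simp add: bilin_add_left bilin_add_right in_radical_def)
    also have "\<dots> = bilin r (compress k M p) c c" by (simp add: bilin_compress Pc_def[abs_def])
    finally show ?thesis using psd by (simp add: psd_iff_bilin)
  qed
  thus "psd k M" using sym by (simp add: psd_iff_bilin)
qed (rule psd_compress)

lemma pencil_compress: "pencil (\<lambda>l. compress k (C l) p) x = compress k (pencil C x) p"
  by (simp add: compress_def bilin_pencil) (simp add: pencil_def)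

lemma psd_of_positive_orthant_subset:
  assumes "positive_orthant \<subseteq> spec_cone k C"
  shows "psd k (C l)"
proof -
  have "axis l 1 \<in> spec_cone k C" using assms by (auto simp: positive_orthant_def axis_def)
  moreover have "pencil C (axis l 1) = C l"
  proof (intro ext)
    fix i j
    have "(\<Sum>l'\<in>UNIV. axis l 1 $ l' * C l' i j) = (\<Sum>l'\<in>UNIV. if l' = l then C l' i j else 0)"
      by (intro sum.cong) (auto simp: axis_def)
    thus "pencil C (axis l 1) i j = C l i j" by (simp add: pencil_def)
  qed
  ultimately show ?thesis by (simp add: spec_cone_def)
qed

theorem lemma12:
  fixes K :: "(real^'n::finite) set"
  assumes "spectrahedral K"
    and "positive_orthant \<subseteq> K"
  shows "\<exists>k C. normalized_rep K k C"
proof -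
  obtain k C where sym: "\<And>l. sym_mat k (C l)" and K: "K = spec_cone k C"
    using assms(1) by (auto simp: spectrahedral_def spectrahedral_rep_def)
  have psd: "psd k (C l)" for l using psd_of_positive_orthant_subset assms(2) K by blast
  define S where "S i j = (\<Sum>l\<in>UNIV. C l i j)" for i j
  have "psd k S"
    using sym psd by (simp add: psd_iff_bilin S_def[abs_def] sym_mat_def bilin_sum_matrix sum_nonneg)
  then obtain r p where orth: "orthonormal k S r p" and span: "\<And>v. in_span_mod_radical k S r p v"
    using gram_schmidt by blast
  have "in_radical k (C l) u" if "in_radical k S u" for l u
    using in_radical_of_sum_psd[of UNIV k C u l] psd that by (simp add: S_def[abs_def])
  hence "in_span_mod_radical k (pencil C x) r p v" for x v
    using span[of v] in_radical_pencil unfolding in_span_mod_radical_def by blast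
  hence "psd r (pencil (\<lambda>l. compress k (C l) p) x) \<longleftrightarrow> psd k (pencil C x)" for x
    by (simp add: pencil_compress psd_compress_iff sym_mat_pencil sym)
  moreover have "(\<Sum>l\<in>UNIV. compress k (C l) p a b) = compress k S p a b" for a b
    by (simp add: compress_def S_def[abs_def] bilin_sum_matrix)
  ultimately have "normalized_rep K r (\<lambda>l. compress k (C l) p)"
    using orth sym psd
    by (auto simp: normalized_rep_def spectrahedral_rep_def K spec_cone_def orthonormal_def
        compress_def[of k S] sym_mat_compress psd_compress)
  then show ?thesis by blast
qed

end
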